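(* Let $\overline{A}^f,\overline{A}^d\in\mathbb{R}^{nd\times nd}$ with $\overline{A}^{f,\top}=\overline{A}^f\succ0$ and $\overline{A}^{d,\top}=\overline{A}^d$, and $b\in\mathbb{R}^{nd}$. Assume $(\overline{A}^f+\overline{A}^d)u+b=0$ has a unique solution $u_*$. Consider the iteration $$u_{\ell+1}=u_\ell-\delta\eta\,(\overline{A}^f u_\ell+\overline{A}^d u_{\ell-1}+b),\qquad \ell\ge1,$$ with $u_0=u_1=0$. If $\lambda_{\min}(\overline{A}^f)>\max\{\lambda_{\max}(\overline{A}^d),|\lambda_{\min}(\overline{A}^d)|\}$, then there is a sufficiently small $\delta\eta>0$ such that $u_\ell\to u_*$ as $\ell\to\infty$.
   Context: $\lambda_{\min}$ and $\lambda_{\max}$ denote the smallest and largest eigenvalues of a symmetric matrix. *)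

theory Defs
  imports "HOL-Analysis.Analysis"
begin

definition mat_eigenvalue :: "real^'n^'n \<Rightarrow> real \<Rightarrow> bool" where
  "mat_eigenvalue A l \<longleftrightarrow> (\<exists>v. v \<noteq> 0 \<and> A *v v = l *\<^sub>R v)"

text \<open>Smallest / largest eigenvalue (meaningful for symmetric matrices, whose
  eigenvalues are real, finitely many and nonempty).\<close>
definition lambda_min :: "real^'n^'n \<Rightarrow> real" where
  "lambda_min A = Min {l. mat_eigenvalue A l}"

definition lambda_max :: "real^'n^'n \<Rightarrow> real" where
  "lambda_max A = Max {l. mat_eigenvalue A l}"

definition pos_def_mat :: "real^'n^'n \<Rightarrow> bool" where
  "pos_def_mat A \<longleftrightarrow> (\<forall>x. x \<noteq> 0 \<longrightarrow> x \<bullet> (A *v x) > 0)"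

end

theory Submission
  imports Defs
begin

text \<open>
  Write \<open>a = \<lambda>\<^sub>m\<^sub>i\<^sub>n(A\<^sup>f)\<close> and \<open>D = max (\<lambda>\<^sub>m\<^sub>a\<^sub>x(A\<^sup>d)) \<bar>\<lambda>\<^sub>m\<^sub>i\<^sub>n(A\<^sup>d)\<bar>\<close>,
  the spectral norm of \<open>A\<^sup>d\<close>. For \<open>h \<lambda>\<^sub>m\<^sub>a\<^sub>x(A\<^sup>f) \<le> 1\<close> the gradient step
  \<open>I - h A\<^sup>f\<close> has norm at most \<open>1 - h a\<close>, so the error \<open>e\<^sub>l = u\<^sub>l - u\<^sub>*\<close> satisfies
  \<open>\<parallel>e\<^sub>l\<^sub>+\<^sub>2\<parallel> \<le> (1 - h a) \<parallel>e\<^sub>l\<^sub>+\<^sub>1\<parallel> + h D \<parallel>e\<^sub>l\<parallel>\<close>. The coefficients sum to \<open>1 - h (a - D) < 1\<close>,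
  and a nonnegative sequence with \<open>x\<^sub>l\<^sub>+\<^sub>2 \<le> p x\<^sub>l\<^sub>+\<^sub>1 + q x\<^sub>l\<close>, \<open>p + q < 1\<close>, decays geometrically:
  with \<open>r = \<surd>(p + q)\<close> the quantity \<open>x\<^sub>l\<^sub>+\<^sub>1 + (r - p) x\<^sub>l\<close> contracts by the factor \<open>r < 1\<close>.
\<close>

lemma selfadjoint_norm_le_quadratic_bound:
  fixes F :: "'a::euclidean_space \<Rightarrow> 'a"
  assumes lin: "linear F" and sym: "\<And>x y. y \<bullet> F x = x \<bullet> F y"
    and bound: "\<And>x. \<bar>x \<bullet> F x\<bar> \<le> d * (norm x)\<^sup>2"
  shows "norm (F x) \<le> d * norm x"
proof (cases "x = 0 \<or> F x = 0")
  case True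
  obtain e :: 'a where "norm e = 1" using norm_Basis SOME_Basis by blast
  then have "0 \<le> d" using bound[of e] by simp
  with True show ?thesis using linear_0[OF lin] by auto
next
  case False
  have unit: "q \<bullet> F p \<le> d" if "norm p = 1" "norm q = 1" for p q
  proof -
    have polar: "4 * (q \<bullet> F p) = (p + q) \<bullet> F (p + q) - (p - q) \<bullet> F (p - q)"
      using sym[of p q]
      by (simp add: linear_add[OF lin] linear_diff[OF lin] inner_add_left inner_add_right
          inner_diff_left inner_diff_right)
    have parallelogram: "(norm (p + q))\<^sup>2 + (norm (p - q))\<^sup>2 = 4"
    proof -
      have "p \<bullet> p = 1" "q \<bullet> q = 1" using that by (simp_all add: dot_square_norm)
      then show ?thesis
        by (simp add: power2_norm_eq_inner inner_add_left inner_add_right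
            inner_diff_left inner_diff_right inner_commute)
    qed
    have "(p + q) \<bullet> F (p + q) - (p - q) \<bullet> F (p - q) \<le> d * ((norm (p + q))\<^sup>2 + (norm (p - q))\<^sup>2)"
      using bound[of "p + q"] bound[of "p - q"] by (simp add: abs_le_iff distrib_left)
    then show ?thesis using polar parallelogram by simp
  qed
  have "norm (F x) / norm x = (F x /\<^sub>R norm (F x)) \<bullet> F (x /\<^sub>R norm x)"
    using False
    by (simp add: linear_scale[OF lin] power2_norm_eq_inner[symmetric] power2_eq_square field_simps)
  also have "\<dots> \<le> d"
    using False by (intro unit) simp_all
  finally show ?thesis using False by (simp add: divide_le_eq mult.commute)
qed

lemma selfadjoint_nonneg_form_zero_imp_zero:
  fixes G :: "'a::euclidean_space \<Rightarrow> 'a"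
  assumes lin: "linear G" and sym: "\<And>x y. y \<bullet> G x = x \<bullet> G y"
    and psd: "\<And>y. 0 \<le> y \<bullet> G y" and null: "x \<bullet> G x = 0"
  shows "G x = 0"
proof -
  define w where "w = G x"
  define K where "K = w \<bullet> G w"
  have expand: "0 \<le> 2 * t * (w \<bullet> w) + t\<^sup>2 * K" for t
  proof -
    have "(x + t *\<^sub>R w) \<bullet> G (x + t *\<^sub>R w) = 2 * t * (w \<bullet> w) + t\<^sup>2 * K"
      using sym[of x w] null unfolding w_def K_def
      by (simp add: linear_add[OF lin] linear_scale[OF lin] inner_add_left inner_add_right
          power2_eq_square algebra_simps)
    then show ?thesis using psd by metis
  qed
  have "w = 0"
  proof (rule ccontr)
    assume "w \<noteq> 0"
    then have pos: "w \<bullet> w > 0" by simp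
    define s where "s = (w \<bullet> w) / (\<bar>K\<bar> + 1)"
    have s: "s > 0" "s * \<bar>K\<bar> < w \<bullet> w"
      using pos unfolding s_def by (auto simp: field_simps)
    have "2 * (w \<bullet> w) \<le> s * K"
      using expand[of "-s"] s(1) by (simp add: power2_eq_square algebra_simps)
    moreover have "s * K \<le> s * \<bar>K\<bar>"
      using s(1) by (simp add: mult_left_mono)
    ultimately show False using s pos by linarith
  qed
  then show ?thesis unfolding w_def by simp
qed

lemma quadratic_form_attains_min_on_sphere:
  fixes F :: "'a::euclidean_space \<Rightarrow> 'a"
  assumes lin: "linear F"
  shows "\<exists>x. norm x = 1 \<and> (\<forall>y. (x \<bullet> F x) * (norm y)\<^sup>2 \<le> y \<bullet> F y)"
proof -
  have "continuous_on UNIV F"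
    using lin by (simp add: linear_continuous_on linear_conv_bounded_linear)
  then have cont: "continuous_on (sphere 0 1) (\<lambda>x. x \<bullet> F x)"
    by (intro continuous_on_inner continuous_on_id) (rule continuous_on_subset, auto)
  obtain e :: 'a where "norm e = 1" using norm_Basis SOME_Basis by blast
  then have "sphere (0::'a) 1 \<noteq> {}" by auto
  then obtain x where x: "norm x = 1" and min: "\<And>z. norm z = 1 \<Longrightarrow> x \<bullet> F x \<le> z \<bullet> F z"
    using continuous_attains_inf[OF compact_sphere _ cont] by auto
  have "(x \<bullet> F x) * (norm y)\<^sup>2 \<le> y \<bullet> F y" for y
  proof (cases "y = 0")
    case True
    then show ?thesis using linear_0[OF lin] by simp
  next
    case False
    have "x \<bullet> F x \<le> (y /\<^sub>R norm y) \<bullet> F (y /\<^sub>R norm y)"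
      using False by (intro min) simp
    also have "\<dots> = (y \<bullet> F y) / (norm y)\<^sup>2"
      using False by (simp add: linear_scale[OF lin] power2_eq_square field_simps)
    finally show ?thesis using False by (simp add: le_divide_eq)
  qed
  with x show ?thesis by blast
qed

lemma selfadjoint_min_eigenvector:
  fixes F :: "'a::euclidean_space \<Rightarrow> 'a"
  assumes lin: "linear F" and sym: "\<And>x y. y \<bullet> F x = x \<bullet> F y"
  shows "\<exists>v m. v \<noteq> 0 \<and> F v = m *\<^sub>R v \<and> (\<forall>y. m * (norm y)\<^sup>2 \<le> y \<bullet> F y)"
proof -
  obtain x where x: "norm x = 1" and min: "\<And>y. (x \<bullet> F x) * (norm y)\<^sup>2 \<le> y \<bullet> F y"
    using quadratic_form_attains_min_on_sphere[OF lin] by blast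
  define m where "m = x \<bullet> F x"
  have "F x - m *\<^sub>R x = 0"
  proof (rule selfadjoint_nonneg_form_zero_imp_zero[of "\<lambda>y. F y - m *\<^sub>R y"])
    show "linear (\<lambda>y. F y - m *\<^sub>R y)"
      by (rule linearI) (simp_all add: linear_add[OF lin] linear_scale[OF lin] algebra_simps)
    show "y \<bullet> (F z - m *\<^sub>R z) = z \<bullet> (F y - m *\<^sub>R y)" for y z
      using sym[of z y] by (simp add: inner_diff_right inner_commute)
    show "0 \<le> y \<bullet> (F y - m *\<^sub>R y)" for y
      using min[of y] unfolding m_def by (simp add: inner_diff_right dot_square_norm)
    show "x \<bullet> (F x - m *\<^sub>R x) = 0"
      using x unfolding m_def by (simp add: inner_diff_right dot_square_norm)
  qed
  moreover have "x \<noteq> 0" using x by auto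
  ultimately show ?thesis using min unfolding m_def by auto
qed

lemma symmetric_matrix_inner_commute:
  fixes A :: "real^'n^'n"
  assumes "transpose A = A"
  shows "y \<bullet> (A *v x) = x \<bullet> (A *v y)"
  by (metis assms dot_lmul_matrix inner_commute vector_transpose_matrix)

lemma finite_mat_eigenvalues:
  fixes A :: "real^'n^'n"
  assumes sym: "transpose A = A"
  shows "finite {l. mat_eigenvalue A l}"
proof -
  define S where "S = {l. mat_eigenvalue A l}"
  define v where "v l = (SOME v. v \<noteq> 0 \<and> A *v v = l *\<^sub>R v)" for l
  have v: "v l \<noteq> 0 \<and> A *v v l = l *\<^sub>R v l" if "l \<in> S" for l
  proof -
    have "\<exists>v. v \<noteq> 0 \<and> A *v v = l *\<^sub>R v" using that unfolding S_def mat_eigenvalue_def by simp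
    then show ?thesis unfolding v_def by (rule someI_ex)
  qed
  have inj: "inj_on v S"
  proof (rule inj_onI)
    fix l l' assume "l \<in> S" "l' \<in> S" "v l = v l'"
    then have "l *\<^sub>R v l = l' *\<^sub>R v l" using v by metis
    then show "l = l'" using v \<open>l \<in> S\<close> by simp
  qed
  \<comment> \<open>distinct eigenvalues have orthogonal, hence independent, eigenvectors\<close>
  have "pairwise orthogonal (v ` S)"
    unfolding pairwise_def orthogonal_def
  proof clarify
    fix l l' assume l: "l \<in> S" and l': "l' \<in> S" and "v l \<noteq> v l'"
    then have "l \<noteq> l'" by auto
    have "l * (v l' \<bullet> v l) = v l' \<bullet> (A *v v l)" using v[OF l] by simp
    also have "\<dots> = v l \<bullet> (A *v v l')" by (rule symmetric_matrix_inner_commute[OF sym])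
    also have "\<dots> = l' * (v l' \<bullet> v l)" using v[OF l'] by (simp add: inner_commute)
    finally show "v l \<bullet> v l' = 0" using \<open>l \<noteq> l'\<close> by (simp add: inner_commute)
  qed
  moreover have "0 \<notin> v ` S" using v by auto
  ultimately have "independent (v ` S)" using pairwise_orthogonal_independent by blast
  then have "finite (v ` S)" using independent_bound by blast
  then show ?thesis using finite_imageD inj unfolding S_def by blast
qed

lemma lambda_min_le_quadratic_form:
  fixes A :: "real^'n^'n"
  assumes sym: "transpose A = A"
  shows "lambda_min A * (norm y)\<^sup>2 \<le> y \<bullet> (A *v y)"
proof -
  obtain v m where v: "v \<noteq> 0" "A *v v = m *\<^sub>R v" and min: "\<forall>y. m * (norm y)\<^sup>2 \<le> y \<bullet> (A *v y)"
    using selfadjoint_min_eigenvector[of "(*v) A"] symmetric_matrix_inner_commute[OF sym] by auto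
  have "mat_eigenvalue A m" using v unfolding mat_eigenvalue_def by auto
  then have "lambda_min A \<le> m" unfolding lambda_min_def using finite_mat_eigenvalues[OF sym] by simp
  then show ?thesis using min by (meson mult_right_mono order_trans zero_le_power2)
qed

lemma quadratic_form_le_lambda_max:
  fixes A :: "real^'n^'n"
  assumes sym: "transpose A = A"
  shows "y \<bullet> (A *v y) \<le> lambda_max A * (norm y)\<^sup>2"
proof -
  have lin: "linear (\<lambda>x. - (A *v x))" by (rule linearI) (simp_all add: algebra_simps)
  obtain v m where v: "v \<noteq> 0" "- (A *v v) = m *\<^sub>R v"
    and min: "\<forall>y. m * (norm y)\<^sup>2 \<le> y \<bullet> - (A *v y)"
    using selfadjoint_min_eigenvector[OF lin] symmetric_matrix_inner_commute[OF sym] by auto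
  have "mat_eigenvalue A (-m)"
    using v unfolding mat_eigenvalue_def by (metis minus_minus scaleR_minus_left)
  then have "-m \<le> lambda_max A" unfolding lambda_max_def using finite_mat_eigenvalues[OF sym] by simp
  then have "(-m) * (norm y)\<^sup>2 \<le> lambda_max A * (norm y)\<^sup>2" by (rule mult_right_mono) simp
  then show ?thesis using min[rule_format, of y] by simp
qed

lemma lambda_min_le_lambda_max:
  fixes A :: "real^'n^'n"
  assumes "transpose A = A"
  shows "lambda_min A \<le> lambda_max A"
proof -
  obtain e :: "real^'n" where "norm e = 1" using norm_Basis SOME_Basis by blast
  then show ?thesis
    using lambda_min_le_quadratic_form[OF assms, of e] quadratic_form_le_lambda_max[OF assms, of e]
    by simp
qed

lemma symmetric_matrix_norm_le:
  fixes A :: "real^'n^'n"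
  assumes sym: "transpose A = A"
  shows "norm (A *v x) \<le> max (lambda_max A) \<bar>lambda_min A\<bar> * norm x"
proof (rule selfadjoint_norm_le_quadratic_bound)
  fix y :: "real^'n"
  let ?D = "max (lambda_max A) \<bar>lambda_min A\<bar>"
  have "- (?D * (norm y)\<^sup>2) \<le> lambda_min A * (norm y)\<^sup>2"
    using mult_right_mono[of "- ?D" "lambda_min A" "(norm y)\<^sup>2"] by simp
  moreover have "lambda_max A * (norm y)\<^sup>2 \<le> ?D * (norm y)\<^sup>2"
    by (rule mult_right_mono) simp_all
  ultimately show "\<bar>y \<bullet> (A *v y)\<bar> \<le> ?D * (norm y)\<^sup>2"
    using lambda_min_le_quadratic_form[OF sym, of y] quadratic_form_le_lambda_max[OF sym, of y]
    unfolding abs_le_iff by linarith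
qed (simp_all add: symmetric_matrix_inner_commute[OF sym])

lemma gradient_step_norm_le:
  fixes A :: "real^'n^'n"
  assumes sym: "transpose A = A" and "0 \<le> h" and "h * lambda_max A \<le> 1"
  shows "norm (x - h *\<^sub>R (A *v x)) \<le> (1 - h * lambda_min A) * norm x"
proof (rule selfadjoint_norm_le_quadratic_bound[of "\<lambda>x. x - h *\<^sub>R (A *v x)"])
  show "linear (\<lambda>x. x - h *\<^sub>R (A *v x))"
    by (rule linearI) (simp_all add: algebra_simps)
  show "y \<bullet> (x - h *\<^sub>R (A *v x)) = x \<bullet> (y - h *\<^sub>R (A *v y))" for x y
    using symmetric_matrix_inner_commute[OF sym, of y x] by (simp add: inner_diff_right inner_commute)
  show "\<bar>y \<bullet> (y - h *\<^sub>R (A *v y))\<bar> \<le> (1 - h * lambda_min A) * (norm y)\<^sup>2" for y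
  proof -
    have "y \<bullet> (y - h *\<^sub>R (A *v y)) = (norm y)\<^sup>2 - h * (y \<bullet> (A *v y))"
      by (simp add: inner_diff_right dot_square_norm)
    moreover have "h * (lambda_min A * (norm y)\<^sup>2) \<le> h * (y \<bullet> (A *v y))"
      using lambda_min_le_quadratic_form[OF sym] assms(2) by (rule mult_left_mono)
    moreover have "h * (y \<bullet> (A *v y)) \<le> h * (lambda_max A * (norm y)\<^sup>2)"
      using quadratic_form_le_lambda_max[OF sym] assms(2) by (rule mult_left_mono)
    moreover have "(h * lambda_max A) * (norm y)\<^sup>2 \<le> 1 * (norm y)\<^sup>2"
      using assms(3) by (rule mult_right_mono) simp
    ultimately show ?thesis by (simp add: algebra_simps)
  qed
qed

lemma two_step_recurrence_tendsto_zero: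
  fixes x :: "nat \<Rightarrow> real"
  assumes nonneg: "\<And>l. 0 \<le> x l" and "0 \<le> p" "0 \<le> q" "p + q < 1"
    and rec: "\<And>l. x (Suc (Suc l)) \<le> p * x (Suc l) + q * x l"
  shows "x \<longlonglongrightarrow> 0"
proof -
  define r where "r = sqrt (p + q)"
  define V where "V l = x (Suc l) + (r - p) * x l" for l
  have r: "r < 1" "r * r = p + q"
    using assms unfolding r_def by (simp_all add: real_sqrt_lt_1_iff)
  have "p\<^sup>2 \<le> p" using assms by (simp add: power2_eq_square mult_left_le)
  then have "p\<^sup>2 \<le> p + q" using assms by linarith
  then have "p \<le> r" unfolding r_def by (rule real_le_rsqrt)
  have "r * p \<le> p"
    using r \<open>0 \<le> p\<close> unfolding r_def by (simp add: mult_left_le_one_le)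
  then have "q \<le> r * (r - p)"
    using r by (simp add: right_diff_distrib)
  have V_nonneg: "0 \<le> V l" for l
    unfolding V_def using nonneg \<open>p \<le> r\<close> by simp
  have V_contract: "V (Suc l) \<le> r * V l" for l
  proof -
    have "V (Suc l) \<le> r * x (Suc l) + q * x l"
      unfolding V_def using rec[of l] by (simp add: algebra_simps)
    also have "\<dots> \<le> r * x (Suc l) + r * (r - p) * x l"
      using \<open>q \<le> r * (r - p)\<close> nonneg by (simp add: mult_right_mono)
    finally show ?thesis unfolding V_def by (simp add: algebra_simps)
  qed
  have "summable V"
  proof (rule summable_ratio_test[of r 0])
    show "norm (V (Suc l)) \<le> r * norm (V l)" for l
      using V_contract V_nonneg by simp
  qed (use r in simp)
  then have "V \<longlonglongrightarrow> 0" by (rule summable_LIMSEQ_zero)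
  have "(\<lambda>l. x (Suc l)) \<longlonglongrightarrow> 0"
  proof (rule tendsto_sandwich[of "\<lambda>_. 0" _ sequentially V])
    show "\<forall>\<^sub>F l in sequentially. 0 \<le> x (Suc l)"
      using nonneg by simp
    show "\<forall>\<^sub>F l in sequentially. x (Suc l) \<le> V l"
      unfolding V_def using nonneg \<open>p \<le> r\<close> by simp
  qed (simp_all add: \<open>V \<longlonglongrightarrow> 0\<close>)
  then show ?thesis by (rule LIMSEQ_imp_Suc)
qed

lemma delayed_gradient_iteration_tendsto:
  fixes Af Ad :: "real^'n^'n" and b ustar :: "real^'n" and u :: "nat \<Rightarrow> real^'n"
  assumes symf: "transpose Af = Af" and symd: "transpose Ad = Ad"
    and gap: "max (lambda_max Ad) \<bar>lambda_min Ad\<bar> < lambda_min Af"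
    and h: "0 < h" "h * lambda_max Af \<le> 1"
    and ustar: "(Af + Ad) *v ustar + b = 0"
    and iter: "\<And>l. l \<ge> 1 \<Longrightarrow> u (l + 1) = u l - h *\<^sub>R (Af *v u l + Ad *v u (l - 1) + b)"
  shows "u \<longlonglongrightarrow> ustar"
proof -
  define a where "a = lambda_min Af"
  define D where "D = max (lambda_max Ad) \<bar>lambda_min Ad\<bar>"
  define e where "e l = u l - ustar" for l
  have err: "norm (e (Suc (Suc l))) \<le> (1 - h * a) * norm (e (Suc l)) + (h * D) * norm (e l)" for l
  proof -
    have b: "b = - (Af *v ustar) - Ad *v ustar"
      using ustar by (simp add: algebra_simps eq_neg_iff_add_eq_0)
    have "e (Suc (Suc l)) = (e (Suc l) - h *\<^sub>R (Af *v e (Suc l))) - h *\<^sub>R (Ad *v e l)"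
      using iter[of "Suc l"] unfolding e_def b
      by (simp add: matrix_vector_mult_diff_distrib algebra_simps)
    also have "norm \<dots> \<le> norm (e (Suc l) - h *\<^sub>R (Af *v e (Suc l))) + norm (h *\<^sub>R (Ad *v e l))"
      by (rule norm_triangle_ineq4)
    also have "\<dots> \<le> (1 - h * a) * norm (e (Suc l)) + h * (D * norm (e l))"
      using gradient_step_norm_le[OF symf] symmetric_matrix_norm_le[OF symd] h
      unfolding a_def D_def by (intro add_mono) (simp_all add: mult_left_mono)
    finally show ?thesis by simp
  qed
  have "h * a \<le> 1"
    using h mult_left_mono[OF lambda_min_le_lambda_max[OF symf], of h] unfolding a_def by linarith
  moreover have "0 \<le> h * D" and "h * D < h * a"
    using h gap unfolding a_def D_def by simp_all
  ultimately have "(\<lambda>l. norm (e l)) \<longlonglongrightarrow> 0"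
    using err by (intro two_step_recurrence_tendsto_zero[of _ "1 - h * a" "h * D"]) simp_all
  then show ?thesis unfolding e_def by (simp add: tendsto_norm_zero_iff LIM_zero_iff)
qed

theorem theorem5:
  fixes Af Ad :: "real^'n^'n" and b :: "real^'n"
  assumes symf: "transpose Af = Af" and pdf: "pos_def_mat Af"
    and symd: "transpose Ad = Ad"
    and uniq: "\<exists>!u. (Af + Ad) *v u + b = 0"
    and eig: "lambda_min Af > max (lambda_max Ad) \<bar>lambda_min Ad\<bar>"
  shows "\<exists>h0>0. \<forall>h. 0 < h \<and> h < h0 \<longrightarrow>
           (\<forall>(u :: nat \<Rightarrow> real^'n) ustar.
              (Af + Ad) *v ustar + b = 0 \<longrightarrow>
              u 0 = 0 \<longrightarrow> u 1 = 0 \<longrightarrow>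
              (\<forall>l\<ge>1. u (l + 1) = u l - h *\<^sub>R (Af *v u l + Ad *v u (l - 1) + b)) \<longrightarrow>
              u \<longlonglongrightarrow> ustar)"
proof -
  have pos: "0 < lambda_max Af"
    using eig lambda_min_le_lambda_max[OF symf] by linarith
  show ?thesis
  proof (intro exI[of _ "1 / lambda_max Af"] conjI allI impI)
    fix h :: real and u :: "nat \<Rightarrow> real^'n" and ustar
    assume "0 < h \<and> h < 1 / lambda_max Af"
      and "(Af + Ad) *v ustar + b = 0"
      and "\<forall>l\<ge>1. u (l + 1) = u l - h *\<^sub>R (Af *v u l + Ad *v u (l - 1) + b)"
    with pos show "u \<longlonglongrightarrow> ustar"
      by (intro delayed_gradient_iteration_tendsto[OF symf symd eig])
        (simp_all add: less_divide_eq less_imp_le)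
  qed (use pos in simp)
qed

end
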